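(* Let $g\in U_n$. There exists $\zeta\in\mathfrak{u}_n$ with $\exp(\zeta)=g$ such that $[\zeta,\xi]=0$ for every $\xi\in\mathfrak{u}_n$ with $\exp(\xi)=g$.
   Context: $\mathfrak{u}_n$ is the Lie algebra of $U_n$ (skew-Hermitian $n\times n$ matrices) and $\exp$ is the matrix exponential. *)

theory Defs
  imports "HOL-Analysis.Analysis"
begin

text \<open>n x n complex matrices are represented as complex^'n^'n, with n = CARD('n).\<close>

primrec mpow :: "complex^'n^'n \<Rightarrow> nat \<Rightarrow> complex^'n^'n" where
  "mpow A 0 = mat 1"
| "mpow A (Suc k) = A ** mpow A k"

definition mexp :: "complex^'n^'n \<Rightarrow> complex^'n^'n" where
  "mexp A = (\<Sum>k. (1 / fact k) *\<^sub>R mpow A k)"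

definition ctrans :: "complex^'n^'n \<Rightarrow> complex^'n^'n" where
  "ctrans A = (\<chi> i j. cnj (A $ j $ i))"

definition unitary_group :: "(complex^'n^'n) set" where
  "unitary_group = {A. ctrans A ** A = mat 1 \<and> A ** ctrans A = mat 1}"

definition unitary_lie_algebra :: "(complex^'n^'n) set" where
  "unitary_lie_algebra = {X. ctrans X = - X}"

definition mbracket :: "complex^'n^'n \<Rightarrow> complex^'n^'n \<Rightarrow> complex^'n^'n" where
  "mbracket X Y = X ** Y - Y ** X"

end

theory Submission
  imports Defs
begin

(* A unitary matrix g is normal, so it has an orthonormal eigenbasis u_1, ..., u_n with
   eigenvalues l_k on the unit circle.  Put zeta = sum_k Ln(l_k) u_k u_k^H.  Since
   Re (Ln l_k) = ln |l_k| = 0, zeta is skew-Hermitian, and exp zeta = g because both act on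
   u_k as multiplication by l_k.  Moreover zeta acts on the whole l-eigenspace of g as the
   scalar Ln l, i.e. zeta is a function of g.  If exp xi = g, then xi commutes with g and so
   preserves every eigenspace of g, on which zeta is a scalar; hence [zeta, xi] = 0.

   The spectral theorem is proved by induction on the dimension of a subspace invariant
   under g and g^H: the commuting Hermitian matrices g + g^H and i (g - g^H) have a common
   eigenvector there, found by maximising the Rayleigh quotient on the unit sphere, and its
   orthogonal complement is again invariant. *)

definition cinner :: "complex^'n \<Rightarrow> complex^'n \<Rightarrow> complex" where
  "cinner x y = (\<Sum>i\<in>UNIV. cnj (x$i) * y$i)"

lemma cinner_zero_left [simp]: "cinner 0 y = 0"
  by (simp add: cinner_def)

lemma cinner_zero_right [simp]: "cinner x 0 = 0"
  by (simp add: cinner_def)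

lemma cinner_add_left: "cinner (x + y) z = cinner x z + cinner y z"
  by (simp add: cinner_def distrib_right sum.distrib)

lemma cinner_add_right: "cinner x (y + z) = cinner x y + cinner x z"
  by (simp add: cinner_def distrib_left sum.distrib)

lemma cinner_diff_right: "cinner x (y - z) = cinner x y - cinner x z"
  by (simp add: cinner_def right_diff_distrib sum_subtractf)

lemma cinner_scale_left: "cinner (c *s x) y = cnj c * cinner x y"
  by (simp add: cinner_def sum_distrib_left algebra_simps)

lemma cinner_scale_right: "cinner x (c *s y) = c * cinner x y"
  by (simp add: cinner_def sum_distrib_left algebra_simps)

lemma cnj_cinner: "cnj (cinner x y) = cinner y x"
  by (simp add: cinner_def mult.commute)

lemma cinner_adjoint: "cinner x (A *v y) = cinner (ctrans A *v x) y"
proof -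
  have "cinner x (A *v y) = (\<Sum>i\<in>UNIV. \<Sum>j\<in>UNIV. cnj (x$i) * A$i$j * y$j)"
    by (simp add: cinner_def matrix_vector_mult_def sum_distrib_left mult.assoc)
  also have "\<dots> = (\<Sum>j\<in>UNIV. \<Sum>i\<in>UNIV. cnj (x$i) * A$i$j * y$j)"
    by (rule sum.swap)
  also have "\<dots> = cinner (ctrans A *v x) y"
    by (simp add: cinner_def matrix_vector_mult_def ctrans_def sum_distrib_left sum_distrib_right
        mult_ac)
  finally show ?thesis .
qed

lemma cinner_self: "cinner x x = of_real ((norm x)\<^sup>2)"
proof -
  have "cinner x x = (\<Sum>i\<in>UNIV. of_real ((cmod (x$i))\<^sup>2))"
    unfolding cinner_def by (simp add: complex_norm_square mult.commute del: of_real_power)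
  also have "\<dots> = of_real ((norm x)\<^sup>2)"
    by (simp add: norm_vec_def L2_set_def sum_nonneg)
  finally show ?thesis .
qed

lemma cinner_self_eq_0 [simp]: "cinner x x = 0 \<longleftrightarrow> x = 0"
  by (simp add: cinner_self)

lemma scaleR_eq_of_real_smult: "r *\<^sub>R x = of_real r *s (x :: complex^'n)"
  unfolding vec_eq_iff vector_scaleR_component vector_smult_component
  by (simp add: scaleR_conv_of_real)

lemma vec_subspace_imp_subspace: "vec.subspace S \<Longrightarrow> subspace (S :: (complex^'n) set)"
  unfolding vec.subspace_def subspace_def scaleR_eq_of_real_smult by blast

lemma ctrans_ctrans [simp]: "ctrans (ctrans A) = A"
  by (simp add: ctrans_def vec_eq_iff)

lemma matrix_vector_mul_mat: "mat c *v x = c *s (x :: 'a::semiring_1^'n)"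
  unfolding vec_eq_iff matrix_vector_mult_def mat_def
  by (simp add: if_distrib[where f="\<lambda>a. a * _"] cong: if_cong)

section \<open>Matrix exponential\<close>

lemma matrix_add_rdistrib: "(A + B) ** C = A ** C + B ** (C :: 'a::semiring_1^'n^'m)"
  by (vector matrix_matrix_mult_def sum.distrib[symmetric] field_simps)

lemma bounded_bilinear_matrix_mult:
  "bounded_bilinear ((**) :: 'a::{euclidean_space,real_algebra_1}^'n^'m \<Rightarrow> 'a^'p^'n \<Rightarrow> 'a^'p^'m)"
  unfolding bilinear_conv_bounded_bilinear[symmetric] bilinear_def
  by (simp add: linearI matrix_add_rdistrib matrix_add_ldistrib scalar_matrix_assoc
      matrix_scalar_ac)

lemma bounded_linear_matrix_vector_mult_left:
  "bounded_linear (\<lambda>A :: 'a::{euclidean_space,real_algebra_1}^'n^'m. A *v x)"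
  unfolding linear_conv_bounded_linear[symmetric]
  by (simp add: linearI matrix_vector_mult_def vec_eq_iff scaleR_sum_right sum.distrib
      algebra_simps)

lemma bounded_linear_smult_left: "bounded_linear (\<lambda>c::complex. c *s x)"
  unfolding linear_conv_bounded_linear[symmetric]
  by (simp add: linearI vec_eq_iff algebra_simps)

lemma summable_mexp:
  fixes A :: "complex^'n^'n"
  shows "summable (\<lambda>k. (1 / fact k) *\<^sub>R mpow A k)"
proof -
  let ?I = "mat 1 :: complex^'n^'n"
  obtain K where "K > 0"
    and K: "\<And>X Y. norm ((X :: complex^'n^'n) ** (Y :: complex^'n^'n)) \<le> norm X * norm Y * K"
    using bounded_bilinear.pos_bounded[OF bounded_bilinear_matrix_mult] by blast
  have mpow_le: "norm (mpow A k) \<le> norm ?I * (K * norm A) ^ k" for k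
  proof (induction k)
    case (Suc k)
    have "norm (mpow A (Suc k)) \<le> norm A * norm (mpow A k) * K"
      unfolding mpow.simps by (rule K)
    also have "\<dots> \<le> norm A * (norm ?I * (K * norm A) ^ k) * K"
      using Suc \<open>K > 0\<close> by (intro mult_right_mono mult_left_mono) auto
    also have "\<dots> = norm ?I * (K * norm A) ^ Suc k"
      by (simp add: mult_ac)
    finally show ?case .
  qed simp
  show ?thesis
  proof (rule summable_comparison_test)
    show "\<exists>N. \<forall>k\<ge>N. norm ((1 / fact k) *\<^sub>R mpow A k) \<le> norm ?I * ((K * norm A) ^ k /\<^sub>R fact k)"
      using mpow_le by (auto simp: divide_simps mult.commute)
    show "summable (\<lambda>k. norm ?I * ((K * norm A) ^ k /\<^sub>R fact k))"
      by (intro summable_mult summable_exp_generic)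
  qed
qed

lemma mpow_commute: "X ** mpow X k = mpow X k ** X"
  by (induction k) (simp_all add: matrix_mul_assoc)

lemma mexp_commute: "X ** mexp X = mexp X ** X"
proof -
  interpret bounded_bilinear "(**) :: complex^'n^'n \<Rightarrow> _"
    by (rule bounded_bilinear_matrix_mult)
  have "X ** mexp X = (\<Sum>k. X ** ((1 / fact k) *\<^sub>R mpow X k))"
    unfolding mexp_def by (rule bounded_linear.suminf[OF bounded_linear_right summable_mexp])
  also have "\<dots> = (\<Sum>k. ((1 / fact k) *\<^sub>R mpow X k) ** X)"
    by (simp add: scaleR_left scaleR_right mpow_commute)
  also have "\<dots> = mexp X ** X"
    unfolding mexp_def
    by (rule bounded_linear.suminf[OF bounded_linear_left summable_mexp, symmetric])
  finally show ?thesis .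
qed

lemma mpow_eigenvector: "A *v u = c *s u \<Longrightarrow> mpow A k *v u = c ^ k *s u"
  by (induction k)
    (simp_all add: matrix_vector_mul_assoc[symmetric] vec.scale vector_smult_assoc mult.commute)

lemma mexp_eigenvector:
  assumes "A *v u = c *s u"
  shows "mexp A *v u = exp c *s u"
proof -
  have "mexp A *v u = (\<Sum>k. ((1 / fact k) *\<^sub>R mpow A k) *v u)"
    unfolding mexp_def
    by (rule bounded_linear.suminf[OF bounded_linear_matrix_vector_mult_left summable_mexp])
  also have "\<dots> = (\<Sum>k. (c ^ k /\<^sub>R fact k) *s u)"
  proof -
    have "((1 / fact k) *\<^sub>R mpow A k) *v u = (1 / fact k) *\<^sub>R (c ^ k *s u)" for k
      by (simp add: mpow_eigenvector[OF assms]
          linear_scale[OF bounded_linear.linear[OF bounded_linear_matrix_vector_mult_left]])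
    also have "\<dots> k = (c ^ k /\<^sub>R fact k) *s u" for k
      unfolding scaleR_eq_of_real_smult vector_smult_assoc
      by (simp add: scaleR_conv_of_real field_simps)
    finally show ?thesis by simp
  qed
  also have "\<dots> = exp c *s u"
    unfolding exp_def
    by (rule bounded_linear.suminf[OF bounded_linear_smult_left summable_exp_generic, symmetric])
  finally show ?thesis .
qed

section \<open>Spectral theorem for normal matrices\<close>

lemma quadratic_nonneg_imp_linear_coeff_0:
  fixes a b :: real
  assumes "\<And>t. 0 \<le> t * a + t\<^sup>2 * b"
  shows "a = 0"
proof (rule ccontr)
  assume "a \<noteq> 0"
  define d where "d = \<bar>b\<bar> + 1"
  have "d > 0" "b < d"
    unfolding d_def by auto
  have "(- a / d) * a + (- a / d)\<^sup>2 * b = a\<^sup>2 * (b - d) / d\<^sup>2"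
    using \<open>d > 0\<close> by (simp add: field_simps power2_eq_square)
  also have "\<dots> < 0"
    using \<open>a \<noteq> 0\<close> \<open>b < d\<close> \<open>d > 0\<close> by (simp add: divide_neg_pos mult_pos_neg)
  finally show False
    using assms[of "- a / d"] by linarith
qed

lemma psd_hermitian_zero_imp_kernel:
  assumes herm: "ctrans M = M" and S: "vec.subspace S" and "x \<in> S" "M *v x \<in> S"
    and psd: "\<And>y. y \<in> S \<Longrightarrow> 0 \<le> Re (cinner y (M *v y))"
    and null: "Re (cinner x (M *v x)) = 0"
  shows "M *v x = 0"
proof -
  define z where "z = M *v x"
  have "0 \<le> t * (2 * (norm z)\<^sup>2) + t\<^sup>2 * Re (cinner z (M *v z))" for t
  proof -
    have "cinner x (M *v z) = cinner z z"
      using cinner_adjoint[of x M z] by (simp add: herm z_def)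
    then have "cinner (x + of_real t *s z) (M *v (x + of_real t *s z))
        = cinner x (M *v x) + of_real (2 * t) * cinner z z + of_real (t\<^sup>2) * cinner z (M *v z)"
      by (simp add: cinner_add_left cinner_add_right cinner_scale_left cinner_scale_right
          matrix_vector_right_distrib vec.scale z_def power2_eq_square algebra_simps)
    moreover have "x + of_real t *s z \<in> S"
      using S \<open>x \<in> S\<close> \<open>M *v x \<in> S\<close> by (simp add: z_def vec.subspace_add vec.subspace_scale)
    ultimately show ?thesis
      using psd[of "x + of_real t *s z"] null by (simp add: cinner_self)
  qed
  then have "2 * (norm z)\<^sup>2 = 0"
    by (rule quadratic_nonneg_imp_linear_coeff_0)
  then show ?thesis
    by (simp add: z_def)
qed

lemma rayleigh_quotient_attains_max:
  assumes S: "vec.subspace S" and "S \<noteq> {0}"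
  shows "\<exists>x\<in>S. norm x = 1 \<and>
    (\<forall>y\<in>S. Re (cinner y (H *v y)) \<le> Re (cinner x (H *v x)) * (norm y)\<^sup>2)"
proof -
  define q where "q y = Re (cinner y (H *v y))" for y
  have "subspace S"
    using S by (rule vec_subspace_imp_subspace)
  have "compact (S \<inter> sphere 0 1)"
    using \<open>subspace S\<close> by (simp add: closed_Int_compact closed_subspace)
  moreover obtain x1 where "x1 \<in> S" "x1 \<noteq> 0"
    using \<open>S \<noteq> {0}\<close> vec.subspace_0[OF S] by blast
  then have "(1 / norm x1) *\<^sub>R x1 \<in> S \<inter> sphere 0 1"
    using \<open>subspace S\<close> by (simp add: subspace_scale)
  then have "S \<inter> sphere 0 1 \<noteq> {}"
    by blast
  moreover have "continuous_on (S \<inter> sphere 0 1) q"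
    unfolding q_def cinner_def matrix_vector_mult_def by (intro continuous_intros)
  ultimately obtain x where x: "x \<in> S \<inter> sphere 0 1" and max: "\<And>y. y \<in> S \<inter> sphere 0 1 \<Longrightarrow> q y \<le> q x"
    using continuous_attains_sup by metis
  have "q y \<le> q x * (norm y)\<^sup>2" if "y \<in> S" for y
  proof (cases "y = 0")
    case False
    have q_scale: "q (r *\<^sub>R v) = r\<^sup>2 * q v" for r v
      by (simp add: q_def scaleR_eq_of_real_smult cinner_scale_left cinner_scale_right vec.scale
          power2_eq_square)
    have "(1 / norm y) *\<^sub>R y \<in> S \<inter> sphere 0 1"
      using \<open>subspace S\<close> \<open>y \<in> S\<close> False by (simp add: subspace_scale)
    then have "q ((1 / norm y) *\<^sub>R y) \<le> q x"
      by (rule max)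
    then show ?thesis
      using False by (simp add: q_scale power_divide divide_le_eq mult.commute)
  qed (simp add: q_def)
  then show ?thesis
    using x unfolding q_def by auto
qed

lemma hermitian_eigenvector_in_invariant_subspace:
  assumes herm: "ctrans H = H" and S: "vec.subspace S" and inv: "\<And>x. x \<in> S \<Longrightarrow> H *v x \<in> S"
    and "S \<noteq> {0}"
  shows "\<exists>x\<in>S. norm x = 1 \<and> (\<exists>\<mu>::real. H *v x = of_real \<mu> *s x)"
proof -
  obtain x where "x \<in> S" "norm x = 1"
    and max: "\<forall>y\<in>S. Re (cinner y (H *v y)) \<le> Re (cinner x (H *v x)) * (norm y)\<^sup>2"
    using rayleigh_quotient_attains_max[OF S \<open>S \<noteq> {0}\<close>] by blast
  define \<mu> where "\<mu> = Re (cinner x (H *v x))"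
  \<comment> \<open>By maximality of x, the form of M is nonnegative on S and vanishes at x.\<close>
  define M where "M = mat (of_real \<mu>) - H"
  have M_apply: "M *v y = of_real \<mu> *s y - H *v y" for y
    by (simp add: M_def matrix_vector_mult_diff_rdistrib matrix_vector_mul_mat)
  have "ctrans M = mat (of_real \<mu>) - ctrans H"
    by (simp add: M_def ctrans_def mat_def vec_eq_iff)
  then have "ctrans M = M"
    by (simp add: herm M_def)
  have Re_M: "Re (cinner y (M *v y)) = \<mu> * (norm y)\<^sup>2 - Re (cinner y (H *v y))" for y
    by (simp add: M_apply cinner_diff_right cinner_scale_right cinner_self)
  have "M *v x \<in> S"
    using S inv \<open>x \<in> S\<close> by (simp add: M_apply vec.subspace_diff vec.subspace_scale)
  then have "M *v x = 0"
    using max \<open>norm x = 1\<close>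
    by (intro psd_hermitian_zero_imp_kernel[OF \<open>ctrans M = M\<close> S \<open>x \<in> S\<close>]) (auto simp: Re_M \<mu>_def)
  then have "H *v x = of_real \<mu> *s x"
    by (simp add: M_apply)
  then show ?thesis
    using \<open>x \<in> S\<close> \<open>norm x = 1\<close> by blast
qed

lemma normal_common_eigenvector_in_invariant_subspace:
  assumes normal: "g ** ctrans g = ctrans g ** g" and S: "vec.subspace S"
    and inv: "\<And>x. x \<in> S \<Longrightarrow> g *v x \<in> S" "\<And>x. x \<in> S \<Longrightarrow> ctrans g *v x \<in> S"
    and "S \<noteq> {0}"
  shows "\<exists>x\<in>S. norm x = 1 \<and> (\<exists>c. g *v x = c *s x \<and> ctrans g *v x = cnj c *s x)"
proof -
  define G where "G = ctrans g"
  define A where "A = g + G"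
  define B where "B = (\<chi> i j. \<i> * (g$i$j - G$i$j))"
  have A_apply: "A *v x = g *v x + G *v x" for x
    by (simp add: A_def matrix_vector_mult_add_rdistrib)
  have B_apply: "B *v x = \<i> *s (g *v x - G *v x)" for x
    by (simp add: B_def vec_eq_iff matrix_vector_mult_def sum_distrib_left sum_subtractf
        algebra_simps)
  have "ctrans A = A" "ctrans B = B"
    by (auto simp: A_def B_def G_def ctrans_def vec_eq_iff algebra_simps)
  have "g *v (G *v x) = G *v (g *v x)" for x
    using normal by (simp add: G_def matrix_vector_mul_assoc)
  then have AB: "A *v (B *v x) = B *v (A *v x)" for x
    by (simp add: A_apply B_apply vec.scale algebra_simps)
  have invA: "A *v x \<in> S" and invB: "B *v x \<in> S" if "x \<in> S" for x
    using that S inv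
    by (simp_all add: A_apply B_apply G_def vec.subspace_add vec.subspace_diff vec.subspace_scale)
  obtain x1 \<alpha> where "x1 \<in> S" "norm x1 = 1" "A *v x1 = of_real \<alpha> *s x1"
    using hermitian_eigenvector_in_invariant_subspace[OF \<open>ctrans A = A\<close> S invA \<open>S \<noteq> {0}\<close>]
    by blast
  define T where "T = {x\<in>S. A *v x = of_real \<alpha> *s x}"
  have T: "vec.subspace T"
    using S unfolding T_def vec.subspace_def
    by (auto simp: matrix_vector_right_distrib vector_add_ldistrib vec.scale mult.commute)
  have "x1 \<in> T" "x1 \<noteq> 0"
    using \<open>x1 \<in> S\<close> \<open>norm x1 = 1\<close> \<open>A *v x1 = of_real \<alpha> *s x1\<close> by (auto simp: T_def)
  then have "T \<noteq> {0}"
    by blast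
  have "B *v x \<in> T" if "x \<in> T" for x
    using that invB AB[of x] by (auto simp: T_def vec.scale)
  then obtain x \<beta> where "x \<in> T" "norm x = 1" "B *v x = of_real \<beta> *s x"
    using hermitian_eigenvector_in_invariant_subspace[OF \<open>ctrans B = B\<close> T _ \<open>T \<noteq> {0}\<close>]
    by blast
  then have "g *v x + G *v x = of_real \<alpha> *s x" "\<i> *s (g *v x - G *v x) = of_real \<beta> *s x"
    by (simp_all add: T_def A_apply B_apply)
  then have "g *v x = ((\<alpha> - \<i> * \<beta>) / 2) *s x \<and> G *v x = cnj ((\<alpha> - \<i> * \<beta>) / 2) *s x"
    unfolding vec_eq_iff by (simp add: complex_eq_iff) (smt (verit))
  then show ?thesis
    using \<open>x \<in> T\<close> \<open>norm x = 1\<close> unfolding T_def G_def by blast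
qed

definition orthonormal_basis :: "(complex^'n) set \<Rightarrow> (complex^'n) set \<Rightarrow> bool" where
  "orthonormal_basis S U \<longleftrightarrow> finite U \<and> U \<subseteq> S \<and>
    (\<forall>u\<in>U. \<forall>v\<in>U. cinner u v = (if u = v then 1 else 0)) \<and>
    (\<forall>w\<in>S. w = (\<Sum>u\<in>U. cinner u w *s u))"

lemma orthonormal_basis_insert:
  assumes S: "vec.subspace S" and "v \<in> S" "cinner v v = 1"
    and U: "orthonormal_basis {w\<in>S. cinner v w = 0} U"
  shows "orthonormal_basis S (insert v U)"
proof -
  have "finite U" and "U \<subseteq> S" and vU: "\<And>u. u \<in> U \<Longrightarrow> cinner v u = 0"
    and ortho: "\<forall>u\<in>U. \<forall>u'\<in>U. cinner u u' = (if u = u' then 1 else 0)"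
    and expand: "\<And>w. w \<in> S \<Longrightarrow> cinner v w = 0 \<Longrightarrow> w = (\<Sum>u\<in>U. cinner u w *s u)"
    using U unfolding orthonormal_basis_def by auto
  have Uv: "cinner u v = 0" if "u \<in> U" for u
    using vU[OF that] cnj_cinner[of v u] by simp
  have "v \<notin> U"
    using vU \<open>cinner v v = 1\<close> by force
  have "w = (\<Sum>u\<in>insert v U. cinner u w *s u)" if "w \<in> S" for w
  proof -
    define w' where "w' = w - cinner v w *s v"
    have "w' \<in> S"
      using S \<open>w \<in> S\<close> \<open>v \<in> S\<close> by (simp add: w'_def vec.subspace_diff vec.subspace_scale)
    moreover have "cinner v w' = 0"
      by (simp add: w'_def cinner_diff_right cinner_scale_right \<open>cinner v v = 1\<close>)
    moreover have "cinner u w' = cinner u w" if "u \<in> U" for u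
      by (simp add: w'_def cinner_diff_right cinner_scale_right Uv[OF that])
    ultimately have "w' = (\<Sum>u\<in>U. cinner u w *s u)"
      using expand by (metis (no_types, lifting) sum.cong)
    then show ?thesis
      using \<open>finite U\<close> \<open>v \<notin> U\<close> by (simp add: w'_def algebra_simps)
  qed
  then show ?thesis
    using \<open>finite U\<close> \<open>U \<subseteq> S\<close> \<open>v \<in> S\<close> \<open>cinner v v = 1\<close> ortho vU Uv
    unfolding orthonormal_basis_def by auto
qed

lemma normal_orthonormal_eigenbasis:
  assumes normal: "g ** ctrans g = ctrans g ** g" and "vec.subspace S"
    and "\<And>x. x \<in> S \<Longrightarrow> g *v x \<in> S" "\<And>x. x \<in> S \<Longrightarrow> ctrans g *v x \<in> S"
  shows "\<exists>U. orthonormal_basis S U \<and> (\<forall>u\<in>U. \<exists>c. g *v u = c *s u \<and> ctrans g *v u = cnj c *s u)"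
  using assms(2-4)
proof (induction "vec.dim S" arbitrary: S rule: less_induct)
  case less
  note S = \<open>vec.subspace S\<close> and inv = less.prems(2,3)
  show ?case
  proof (cases "S = {0}")
    case True
    then show ?thesis
      by (intro exI[of _ "{}"]) (simp add: orthonormal_basis_def)
  next
    case False
    obtain v c where "v \<in> S" "norm v = 1" and v: "g *v v = c *s v" "ctrans g *v v = cnj c *s v"
      using normal_common_eigenvector_in_invariant_subspace[OF normal S inv False] by blast
    have "cinner v v = 1"
      using \<open>norm v = 1\<close> by (simp add: cinner_self)
    define S' where "S' = {w\<in>S. cinner v w = 0}"
    have S': "vec.subspace S'"
      using S unfolding S'_def vec.subspace_def by (auto simp: cinner_add_right cinner_scale_right)
    have inv': "g *v x \<in> S'" "ctrans g *v x \<in> S'" if "x \<in> S'" for x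
      using that inv cinner_adjoint[of v g x] cinner_adjoint[of v "ctrans g" x]
      by (auto simp: S'_def v cinner_scale_left)
    have "v \<notin> S'"
      using \<open>cinner v v = 1\<close> by (simp add: S'_def)
    then have "S' \<subset> S"
      using \<open>v \<in> S\<close> unfolding S'_def by blast
    then have "vec.span S' \<subset> vec.span S"
      using S S' by (simp add: vec.span_eq_iff[THEN iffD2])
    then have "vec.dim S' < vec.dim S"
      by (rule vec.dim_psubset)
    then obtain U where "orthonormal_basis S' U"
      and "\<forall>u\<in>U. \<exists>c. g *v u = c *s u \<and> ctrans g *v u = cnj c *s u"
      using less.hyps[OF _ S'] inv' by blast
    then show ?thesis
      using orthonormal_basis_insert[OF S \<open>v \<in> S\<close> \<open>cinner v v = 1\<close>] v
      unfolding S'_def by blast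
  qed
qed

lemma matrix_eq_on_orthonormal_basis:
  assumes "orthonormal_basis UNIV U" and "\<And>u. u \<in> U \<Longrightarrow> A *v u = B *v u"
  shows "A = B"
proof (rule matrix_eq[THEN iffD2], rule allI)
  fix w
  have expand: "w = (\<Sum>u\<in>U. cinner u w *s u)"
    using assms(1) unfolding orthonormal_basis_def by blast
  have "A *v w = (\<Sum>u\<in>U. cinner u w *s (A *v u))"
    by (subst expand) (simp only: vec.sum vec.scale)
  also have "\<dots> = (\<Sum>u\<in>U. cinner u w *s (B *v u))"
    using assms(2) by simp
  also have "\<dots> = B *v w"
    by (subst (2) expand) (simp only: vec.sum vec.scale)
  finally show "A *v w = B *v w" .
qed

section \<open>Functions of a normal matrix\<close>

definition spectral_matrix :: "(complex^'n) set \<Rightarrow> (complex^'n \<Rightarrow> complex) \<Rightarrow> complex^'n^'n" where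
  "spectral_matrix U f = (\<chi> i j. \<Sum>u\<in>U. f u * u$i * cnj (u$j))"

lemma spectral_matrix_vector_mult: "spectral_matrix U f *v w = (\<Sum>u\<in>U. (f u * cinner u w) *s u)"
proof -
  have "(spectral_matrix U f *v w) $ i = (\<Sum>j\<in>UNIV. \<Sum>u\<in>U. f u * u$i * cnj (u$j) * w$j)" for i
    by (simp add: spectral_matrix_def matrix_vector_mult_def sum_distrib_right)
  also have "\<dots> i = (\<Sum>u\<in>U. \<Sum>j\<in>UNIV. f u * u$i * cnj (u$j) * w$j)" for i
    by (rule sum.swap)
  also have "\<dots> i = (\<Sum>u\<in>U. (f u * cinner u w) *s u) $ i" for i
    by (simp add: cinner_def sum_component sum_distrib_left mult_ac)
  finally show ?thesis
    by (simp add: vec_eq_iff)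
qed

lemma ctrans_spectral_matrix: "ctrans (spectral_matrix U f) = spectral_matrix U (\<lambda>u. cnj (f u))"
  by (simp add: ctrans_def spectral_matrix_def vec_eq_iff mult_ac)

lemma spectral_matrix_uminus: "spectral_matrix U (\<lambda>u. - f u) = - spectral_matrix U f"
  by (simp add: spectral_matrix_def vec_eq_iff sum_negf)

lemma spectral_matrix_basis_vector:
  assumes "orthonormal_basis S U" and "v \<in> U"
  shows "spectral_matrix U f *v v = f v *s v"
proof -
  have "finite U" and "\<forall>u\<in>U. cinner u v = (if u = v then 1 else 0)"
    using assms unfolding orthonormal_basis_def by auto
  then have "spectral_matrix U f *v v = (\<Sum>u\<in>U. if u = v then f v *s v else 0)"
    unfolding spectral_matrix_vector_mult by (intro sum.cong) auto
  then show ?thesis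
    using \<open>finite U\<close> \<open>v \<in> U\<close> by simp
qed

lemma spectral_matrix_eigenvector:
  assumes basis: "orthonormal_basis UNIV U"
    and eigen: "\<And>u. u \<in> U \<Longrightarrow> ctrans g *v u = cnj (ev u) *s u"
    and "g *v w = c *s w"
  shows "spectral_matrix U (\<lambda>u. h (ev u)) *v w = h c *s w"
proof -
  have coeff: "h (ev u) * cinner u w = h c * cinner u w" if "u \<in> U" for u
  proof -
    have "c * cinner u w = ev u * cinner u w"
      using cinner_adjoint[of u g w] \<open>g *v w = c *s w\<close>
      by (simp add: eigen[OF that] cinner_scale_left cinner_scale_right)
    then have "cinner u w = 0 \<or> ev u = c"
      by auto
    then show ?thesis
      by auto
  qed
  have "spectral_matrix U (\<lambda>u. h (ev u)) *v w = (\<Sum>u\<in>U. (h c * cinner u w) *s u)"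
    unfolding spectral_matrix_vector_mult by (rule sum.cong[OF refl]) (metis coeff)
  also have "\<dots> = h c *s (\<Sum>u\<in>U. cinner u w *s u)"
    by (simp add: vec.scale_sum_right)
  also have "\<dots> = h c *s w"
    using basis unfolding orthonormal_basis_def by simp
  finally show ?thesis .
qed

lemma spectral_matrix_commute:
  assumes basis: "orthonormal_basis UNIV U"
    and eigen: "\<And>u. u \<in> U \<Longrightarrow> g *v u = ev u *s u \<and> ctrans g *v u = cnj (ev u) *s u"
    and "X ** g = g ** X"
  shows "spectral_matrix U (\<lambda>u. h (ev u)) ** X = X ** spectral_matrix U (\<lambda>u. h (ev u))"
proof (rule matrix_eq_on_orthonormal_basis[OF basis])
  fix u
  assume "u \<in> U"
  have "g *v (X *v u) = ev u *s (X *v u)"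
    using \<open>X ** g = g ** X\<close> eigen[OF \<open>u \<in> U\<close>]
    by (metis matrix_vector_mul_assoc vec.scale)
  then have "spectral_matrix U (\<lambda>u. h (ev u)) *v (X *v u) = h (ev u) *s (X *v u)"
    using eigen by (intro spectral_matrix_eigenvector[OF basis]) auto
  then show "(spectral_matrix U (\<lambda>u. h (ev u)) ** X) *v u
      = (X ** spectral_matrix U (\<lambda>u. h (ev u))) *v u"
    by (simp add: matrix_vector_mul_assoc[symmetric] spectral_matrix_basis_vector[OF basis \<open>u \<in> U\<close>]
        vec.scale)
qed

section \<open>Logarithms of unitary matrices\<close>

lemma unitary_eigenvalue_norm:
  assumes "ctrans g ** g = mat 1" and "g *v u = c *s u" "ctrans g *v u = cnj c *s u" and "u \<noteq> 0"
  shows "cmod c = 1"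
proof -
  have "u = (ctrans g ** g) *v u"
    using assms(1) by simp
  also have "\<dots> = (cnj c * c) *s u"
    by (simp add: matrix_vector_mul_assoc[symmetric] assms(2,3) vec.scale vector_smult_assoc)
  finally have "cnj c * c = 1"
    using \<open>u \<noteq> 0\<close> by (metis vector_mul_rcancel vector_smult_lid)
  then have "(cmod c)\<^sup>2 = 1"
    by (metis complex_norm_square mult.commute of_real_eq_1_iff)
  then show ?thesis
    using norm_ge_zero[of c] by (auto simp: power2_eq_1_iff)
qed

lemma cnj_Ln_of_norm_1:
  assumes "cmod z = 1"
  shows "cnj (Ln z) = - Ln z"
proof -
  have "Re (Ln z) = 0"
    using assms by (subst Re_Ln) auto
  then show ?thesis
    by (simp add: complex_eq_iff)
qed

lemma unitary_log_commuting_with_commutant: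
  assumes unitary: "ctrans g ** g = mat 1" "g ** ctrans g = mat 1"
  shows "\<exists>\<zeta>. ctrans \<zeta> = - \<zeta> \<and> mexp \<zeta> = g \<and> (\<forall>X. X ** g = g ** X \<longrightarrow> \<zeta> ** X = X ** \<zeta>)"
proof -
  obtain U where basis: "orthonormal_basis UNIV U"
    and "\<forall>u\<in>U. \<exists>c. g *v u = c *s u \<and> ctrans g *v u = cnj c *s u"
    using normal_orthonormal_eigenbasis[of g UNIV] unitary by auto
  then obtain ev where eigen: "\<And>u. u \<in> U \<Longrightarrow> g *v u = ev u *s u \<and> ctrans g *v u = cnj (ev u) *s u"
    by metis
  have unit: "cmod (ev u) = 1" if "u \<in> U" for u
    using basis that eigen[OF that] unitary_eigenvalue_norm[OF unitary(1)]
    unfolding orthonormal_basis_def by fastforce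
  define \<zeta> where "\<zeta> = spectral_matrix U (\<lambda>u. Ln (ev u))"
  have "ctrans \<zeta> = - \<zeta>"
    unfolding \<zeta>_def ctrans_spectral_matrix spectral_matrix_uminus[symmetric]
    by (simp add: spectral_matrix_def cnj_Ln_of_norm_1 unit cong: sum.cong)
  moreover have "mexp \<zeta> = g"
  proof (rule matrix_eq_on_orthonormal_basis[OF basis])
    fix u
    assume "u \<in> U"
    have "\<zeta> *v u = Ln (ev u) *s u"
      unfolding \<zeta>_def by (rule spectral_matrix_basis_vector[OF basis \<open>u \<in> U\<close>])
    then have "mexp \<zeta> *v u = exp (Ln (ev u)) *s u"
      by (rule mexp_eigenvector)
    moreover have "ev u \<noteq> 0"
      using unit[OF \<open>u \<in> U\<close>] by force
    ultimately show "mexp \<zeta> *v u = g *v u"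
      by (simp add: eigen[OF \<open>u \<in> U\<close>])
  qed
  moreover have "\<zeta> ** X = X ** \<zeta>" if "X ** g = g ** X" for X
    unfolding \<zeta>_def by (rule spectral_matrix_commute[OF basis eigen that])
  ultimately show ?thesis
    by blast
qed

theorem mainTheorem3:
  fixes g :: "complex^'n^'n"
  assumes "g \<in> unitary_group"
  shows "\<exists>\<zeta>\<in>unitary_lie_algebra. mexp \<zeta> = g \<and>
           (\<forall>\<xi>\<in>unitary_lie_algebra. mexp \<xi> = g \<longrightarrow> mbracket \<zeta> \<xi> = 0)"
proof -
  have "ctrans g ** g = mat 1" "g ** ctrans g = mat 1"
    using assms unfolding unitary_group_def by auto
  then obtain \<zeta> where "ctrans \<zeta> = - \<zeta>" "mexp \<zeta> = g"
    and commute: "\<And>X. X ** g = g ** X \<Longrightarrow> \<zeta> ** X = X ** \<zeta>"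
    using unitary_log_commuting_with_commutant by blast
  have "mbracket \<zeta> \<xi> = 0" if "mexp \<xi> = g" for \<xi>
    using commute[of \<xi>] mexp_commute[of \<xi>] that unfolding mbracket_def by simp
  then show ?thesis
    using \<open>ctrans \<zeta> = - \<zeta>\<close> \<open>mexp \<zeta> = g\<close> unfolding unitary_lie_algebra_def by blast
qed

end
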